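(* Consider a single indivisible item offered by a seller (player $0$) to $n\ge 2$ bidders with independent private values $\theta_i\in[\underline v,\bar v]$, each drawn from a common distribution $F$ that is common knowledge, strictly increasing in the interior of $[\underline v,\bar v]$ and continuously differentiable. A bidder $i$ who wins at price $t_i$ gets utility $\theta_i-t_i$; a losing bidder gets $0$. Three auction formats are considered: (i) the first-price auction (FP): the highest bidder wins and pays her own bid; (ii) the credible second-price auction (CSP): the highest bidder wins and pays the second-highest bid; (iii) the non-credible second-price auction (NCSP): after observing all bids, the seller picks a winner $y$ and a price $t_y\in[0,b_y]$, with utility $t_y-c(t_y-b_{(2)})$, where $b_{(2)}$ is the second-highest bid and $c$ is a differentiable convex function, strictly increasing for $x\ge0$, strictly decreasing for $x<0$, with $c(0)=0$ and $c'(0)\le 1$; bidders observe only whether they win and their own payment. In the NCSP auction the seller selects the highest bidder and charges $\min\{b_{(1)},b_{(2)}+\gamma\}$, where $b_{(1)}$ is the highest bid and $\gamma>0$ satisfies $c'(\gamma)=1$. Let $\mathbf{b^{FP}}$, $\mathbf{b^{NCSP}}$, $\mathbf{b^{CSP}}$ denote symmetric and strictly increasing equilibrium bidding functions (symmetric Perfect Bayesian equilibrium in undominated strategies) in the FP, NCSP and CSP auctions respectively. Then for each bidder $i$ and each value $\theta_i\in[\underline v,\bar v]$, $$\mathbb{E}\Big[\max_{j\ne i}\theta_j \,\Big|\, \max_{j\ne i}\theta_j<\theta_i\Big]=\mathbf{b^{FP}}(\theta_i)\le \mathbf{b^{NCSP}}(\theta_i)<\mathbf{b^{CSP}}(\t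heta_i)=\theta_i.$$
   Context: The NCSP seller behaviour described (choose the highest bidder, charge $\min\{b_{(1)},b_{(2)}+\gamma\}$) is the seller's equilibrium strategy in the model; bidders take it into account when choosing bids. *)

theory Defs
  imports "HOL-Analysis.Analysis"
begin

text \<open>Values lie in [vl, vh]. The common CDF F is extended to the whole real line by
  clamping, and the distribution of a single value is the Lebesgue-Stieltjes measure of F.\<close>

definition clamp :: "real \<Rightarrow> real \<Rightarrow> real \<Rightarrow> real" where
  "clamp vl vh x = max vl (min vh x)"

definition value_dist :: "real \<Rightarrow> real \<Rightarrow> (real \<Rightarrow> real) \<Rightarrow> real measure" where
  "value_dist vl vh F = interval_measure (\<lambda>x. F (clamp vl vh x))"

text \<open>Joint distribution of the values of the k = n - 1 opponents of a fixed bidder i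
  (independent, identically distributed), indexed by 0..<k.\<close>

definition others_dist :: "nat \<Rightarrow> real \<Rightarrow> real \<Rightarrow> (real \<Rightarrow> real) \<Rightarrow> (nat \<Rightarrow> real) measure" where
  "others_dist k vl vh F = PiM {..<k} (\<lambda>_. value_dist vl vh F)"

definition highest_other :: "nat \<Rightarrow> (nat \<Rightarrow> real) \<Rightarrow> real" where
  "highest_other k d = Max (d ` {..<k})"

definition win_prob :: "nat \<Rightarrow> real \<Rightarrow> (nat \<Rightarrow> real) \<Rightarrow> real" where
  "win_prob k b d =
     (if highest_other k d < b then 1
      else if b = highest_other k d then 1 / (1 + real (card {j\<in>{..<k}. d j = b}))
      else 0)"

text \<open>Utilities of bidder i with value th, own bid b, opponents' bids d.
  When i is a highest bidder, the highest opponent bid is the second-highest bid b_(2).\<close>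

definition util_FP :: "nat \<Rightarrow> real \<Rightarrow> real \<Rightarrow> (nat \<Rightarrow> real) \<Rightarrow> real" where
  "util_FP k th b d = win_prob k b d * (th - b)"

definition util_CSP :: "nat \<Rightarrow> real \<Rightarrow> real \<Rightarrow> (nat \<Rightarrow> real) \<Rightarrow> real" where
  "util_CSP k th b d = win_prob k b d * (th - highest_other k d)"

text \<open>NCSP: the seller (in its equilibrium behaviour) picks the highest bidder and
  charges min (b_(1)) (b_(2) + gamma).\<close>

definition util_NCSP :: "real \<Rightarrow> nat \<Rightarrow> real \<Rightarrow> real \<Rightarrow> (nat \<Rightarrow> real) \<Rightarrow> real" where
  "util_NCSP \<gamma> k th b d = win_prob k b d * (th - min b (highest_other k d + \<gamma>))"

definition expected_util ::
  "(real \<Rightarrow> real \<Rightarrow> (nat \<Rightarrow> real) \<Rightarrow> real) \<Rightarrow> nat \<Rightarrow> real \<Rightarrow> real \<Rightarrow> (real \<Rightarrow> real)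
   \<Rightarrow> (real \<Rightarrow> real) \<Rightarrow> real \<Rightarrow> real \<Rightarrow> real" where
  "expected_util u k vl vh F \<beta> th b =
     (\<integral>ths. u th b (\<lambda>j. \<beta> (clamp vl vh (ths j))) \<partial>others_dist k vl vh F)"

definition weakly_dominated ::
  "(real \<Rightarrow> real \<Rightarrow> (nat \<Rightarrow> real) \<Rightarrow> real) \<Rightarrow> nat \<Rightarrow> real \<Rightarrow> real \<Rightarrow> bool" where
  "weakly_dominated u k th b \<longleftrightarrow>
     (\<exists>b'\<ge>0. (\<forall>d. (\<forall>j<k. 0 \<le> d j) \<longrightarrow> u th b d \<le> u th b' d) \<and>
             (\<exists>d. (\<forall>j<k. 0 \<le> d j) \<and> u th b d < u th b' d))"

definition sym_equilibrium ::
  "(real \<Rightarrow> real \<Rightarrow> (nat \<Rightarrow> real) \<Rightarrow> real) \<Rightarrow> nat \<Rightarrow> real \<Rightarrow> real \<Rightarrow> (real \<Rightarrow> real)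
   \<Rightarrow> (real \<Rightarrow> real) \<Rightarrow> bool" where
  "sym_equilibrium u k vl vh F \<beta> \<longleftrightarrow>
     strict_mono_on {vl..vh} \<beta> \<and>
     (\<forall>th\<in>{vl..vh}. 0 \<le> \<beta> th) \<and>
     (\<forall>th\<in>{vl..vh}. \<forall>b\<ge>0. expected_util u k vl vh F \<beta> th b \<le> expected_util u k vl vh F \<beta> th (\<beta> th)) \<and>
     (\<forall>th\<in>{vl..vh}. \<not> weakly_dominated u k th (\<beta> th))"

definition cond_exp_max_below :: "nat \<Rightarrow> real \<Rightarrow> real \<Rightarrow> (real \<Rightarrow> real) \<Rightarrow> real \<Rightarrow> real" where
  "cond_exp_max_below k vl vh F th =
     (\<integral>ths. highest_other k ths * indicator {ths. highest_other k ths < th} ths \<partial>others_dist k vl vh F)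
     / measure (others_dist k vl vh F) {ths \<in> space (others_dist k vl vh F). highest_other k ths < th}"

end

theory Submission
  imports Defs "HOL-Probability.Probability"
begin

text \<open>Undominated bidding pins down the two second-price formats. In the credible one, bidding
  the value weakly dominates every other bid. In the non-credible one, every bid b \<ge> th is weakly
  dominated by a bid b' in (th - \<gamma>, th): against a highest opposing bid above th - \<gamma> the
  seller's price min b (b_(2) + \<gamma>) is at least th, so such wins are worthless anyway.

  The other comparison is revenue equivalence. Take a symmetric strictly increasing equilibrium
  of an auction in which the winner pays p(own bid, opposing bids). A bidder of type z wins iff
  Y < z, where Y is the highest opposing value, so bidding like type z gives type t the utility
  t G(z) - m(z), where G(z) = P(Y < z) and m is the expected payment. The incentive constraints
  between types z \<le> t give z (G t - G z) \<le> m t - m z \<le> t (G t - G z). The partial mean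
  E[Y; Y < t] satisfies the same bounds and, like m, vanishes at the lowest type, so the two
  coincide. In the first-price auction m(z) = \<beta>(z) G(z), hence \<beta>(z) = E[Y | Y < z]. In the
  non-credible auction the price never exceeds the bid, so m(z) \<le> \<beta>(z) G(z).\<close>

lemma mono_on_Icc_if_mono_on_Ioo:
  fixes f :: "real \<Rightarrow> real"
  assumes cont: "continuous_on {a..b} f" and mono: "mono_on {a<..<b} f"
  shows "mono_on {a..b} f"
proof (rule mono_onI)
  fix x y assume x: "x \<in> {a..b}" and y: "y \<in> {a..b}" and "x \<le> y"
  show "f x \<le> f y"
  proof (cases "x = y")
    case False
    define m where "m = (x + y) / 2"
    have m: "x < m" "m < y" "m \<in> {a<..<b}"
      using x y \<open>x \<le> y\<close> False by (auto simp: m_def)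
    have "f x \<le> f m"
    proof (rule continuous_le_on_closure[where S="{x<..<m}" and f=f])
      show "continuous_on (closure {x<..<m}) f"
        using m x y by (auto intro: continuous_on_subset[OF cont])
      show "f u \<le> f m" if "u \<in> {x<..<m}" for u
        using that m x by (intro mono_onD[OF mono]) auto
    qed (use m in auto)
    also have "f m \<le> f y"
    proof (rule continuous_ge_on_closure[where S="{m<..<y}" and f=f])
      show "continuous_on (closure {m<..<y}) f"
        using m x y by (auto intro: continuous_on_subset[OF cont])
      show "f m \<le> f u" if "u \<in> {m<..<y}" for u
        using that m y by (intro mono_onD[OF mono]) auto
    qed (use m in auto)
    finally show ?thesis .
  qed simp
qed

text \<open>Summing the increments over a uniform partition of [a, b] into m pieces bounds
  \<bar>D b - D a\<bar> by (b - a) (G b - G a) / m.\<close>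

lemma eq_if_increments_bounded:
  fixes D G :: "real \<Rightarrow> real"
  assumes "a \<le> b"
    and incr: "\<And>z t. a \<le> z \<Longrightarrow> z \<le> t \<Longrightarrow> t \<le> b \<Longrightarrow> \<bar>D t - D z\<bar> \<le> (t - z) * (G t - G z)"
  shows "D b = D a"
proof -
  have bound: "\<bar>D b - D a\<bar> \<le> (b - a) / real m * (G b - G a)" if "m > 0" for m :: nat
  proof -
    define x where "x i = a + real i * (b - a) / real m" for i
    have step: "x (Suc i) - x i = (b - a) / real m" for i
      by (simp add: x_def add_divide_distrib[symmetric] algebra_simps)
    have x_ends: "x 0 = a" "x m = b"
      using \<open>m > 0\<close> by (auto simp: x_def)
    have x_between: "a \<le> x i" "x i \<le> x (Suc i)" "x (Suc i) \<le> b" if "i < m" for i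
    proof -
      have "real i * (b - a) / real m \<le> real (Suc i) * (b - a) / real m"
           "real (Suc i) * (b - a) / real m \<le> real m * (b - a) / real m"
        using \<open>a \<le> b\<close> that by (intro divide_right_mono mult_right_mono; simp)+
      then show "a \<le> x i" "x i \<le> x (Suc i)" "x (Suc i) \<le> b"
        using \<open>a \<le> b\<close> \<open>m > 0\<close> by (auto simp: x_def)
    qed
    have "\<bar>D b - D a\<bar> = \<bar>\<Sum>i<m. D (x (Suc i)) - D (x i)\<bar>"
      by (subst sum_lessThan_telescope) (simp add: x_ends)
    also have "\<dots> \<le> (\<Sum>i<m. \<bar>D (x (Suc i)) - D (x i)\<bar>)"
      by (rule sum_abs)
    also have "\<dots> \<le> (\<Sum>i<m. (b - a) / real m * (G (x (Suc i)) - G (x i)))"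
      using incr[OF x_between] by (intro sum_mono) (simp add: step)
    also have "\<dots> = (b - a) / real m * (G b - G a)"
      by (subst sum_distrib_left[symmetric], subst sum_lessThan_telescope) (simp add: x_ends)
    finally show ?thesis .
  qed
  have "(\<lambda>m. (b - a) / real m * (G b - G a)) \<longlonglongrightarrow> 0"
    by (intro tendsto_mult_left_zero tendsto_divide_0[OF tendsto_const]
        filterlim_at_top_imp_at_infinity filterlim_real_sequentially)
  then have "\<bar>D b - D a\<bar> \<le> 0"
    by (rule LIMSEQ_le_const) (use bound in \<open>auto intro: exI[of _ 1]\<close>)
  then show ?thesis
    by simp
qed

section \<open>Weakly dominated bids\<close>

lemma clamp_id: "x \<in> {vl..vh} \<Longrightarrow> clamp vl vh x = x"
  by (auto simp: clamp_def)

lemma mono_clamp: "mono (clamp vl vh)"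
  by (auto simp: clamp_def intro: monoI)

lemma highest_other_const: "1 \<le> k \<Longrightarrow> highest_other k (\<lambda>_. x) = x"
  by (simp add: highest_other_def image_constant_conv lessThan_empty_iff)

lemma highest_other_in: "1 \<le> k \<Longrightarrow> highest_other k d \<in> d ` {..<k}"
  unfolding highest_other_def by (intro Max_in) (auto simp: lessThan_empty_iff)

lemma highest_other_mono_comp:
  "1 \<le> k \<Longrightarrow> mono h \<Longrightarrow> highest_other k (\<lambda>j. h (d j)) = h (highest_other k d)"
  unfolding highest_other_def
  by (subst mono_Max_commute) (auto simp: image_image lessThan_empty_iff)

lemma measurable_highest_other[measurable]:
  assumes "\<And>j. j < k \<Longrightarrow> (\<lambda>x. d x j) \<in> borel_measurable M"
  shows "(\<lambda>x. highest_other k (d x)) \<in> borel_measurable M"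
  unfolding highest_other_def using assms by (intro borel_measurable_Max) auto

lemma win_prob_eq_1: "highest_other k d < b \<Longrightarrow> win_prob k b d = 1"
  by (simp add: win_prob_def)

lemma win_prob_eq_0: "b < highest_other k d \<Longrightarrow> win_prob k b d = 0"
  by (simp add: win_prob_def)

lemma win_prob_tie_pos: "highest_other k d = b \<Longrightarrow> 0 < win_prob k b d"
  by (simp add: win_prob_def)

lemma win_prob_nonneg: "0 \<le> win_prob k b d"
  by (simp add: win_prob_def)

lemma win_prob_le_1: "win_prob k b d \<le> 1"
  by (simp add: win_prob_def)

lemma measurable_win_prob[measurable]:
  assumes [measurable]: "\<And>j. j < k \<Longrightarrow> (\<lambda>x. d x j) \<in> borel_measurable M"
  shows "(\<lambda>x. win_prob k b (d x)) \<in> borel_measurable M"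
proof -
  have "real (card {j\<in>{..<k}. d x j = b}) = (\<Sum>j<k. if d x j = b then 1 else 0)" for x
  proof -
    have "real (card {j\<in>{..<k}. d x j = b}) = (\<Sum>j\<in>{j\<in>{..<k}. d x j = b}. 1)"
      by simp
    also have "\<dots> = (\<Sum>j<k. if d x j = b then 1 else 0)"
      by (rule sum.inter_filter) simp
    finally show ?thesis .
  qed
  then have [measurable]: "(\<lambda>x. real (card {j\<in>{..<k}. d x j = b})) \<in> borel_measurable M"
    by simp
  show ?thesis
    unfolding win_prob_def by measurable
qed

lemma util_CSP_le_truthful: "util_CSP k th b d \<le> util_CSP k th th d"
proof -
  consider "highest_other k d < th" | "highest_other k d = th" | "th < highest_other k d"
    by linarith
  then show ?thesis
  proof cases
    case 1
    then show ?thesis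
      using win_prob_nonneg[of k b d] win_prob_le_1[of k b d]
      by (simp add: util_CSP_def win_prob_eq_1 mult_left_le_one_le)
  next
    case 3
    then show ?thesis
      using win_prob_nonneg[of k b d] by (simp add: util_CSP_def win_prob_eq_0 mult_nonneg_nonpos)
  qed (simp add: util_CSP_def)
qed

lemma undominated_CSP_bid_eq_value:
  assumes k: "1 \<le> k" and "0 \<le> th" "0 \<le> b"
    and undominated: "\<not> weakly_dominated (util_CSP k) k th b"
  shows "b = th"
proof (rule ccontr)
  assume "b \<noteq> th"
  define x where "x = (b + th) / 2"
  have "util_CSP k th b (\<lambda>_. x) < util_CSP k th th (\<lambda>_. x)"
    using \<open>b \<noteq> th\<close>
    by (cases "b < th")
      (auto simp: util_CSP_def highest_other_const[OF k] win_prob_eq_1 win_prob_eq_0 x_def)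
  then have "weakly_dominated (util_CSP k) k th b"
    unfolding weakly_dominated_def using \<open>0 \<le> th\<close> \<open>0 \<le> b\<close> util_CSP_le_truthful
    by (intro exI[of _ th]) (auto intro!: exI[of _ "\<lambda>_. x"] simp: x_def)
  with undominated show False ..
qed

lemma util_NCSP_le_underbid:
  assumes "th \<le> b" "th - \<gamma> < b'" "b' < th"
  shows "util_NCSP \<gamma> k th b d \<le> util_NCSP \<gamma> k th b' d"
proof -
  define y where "y = highest_other k d"
  consider "y < b'" | "y = b'" | "b' < y"
    by linarith
  then show ?thesis
  proof cases
    case 1
    then show ?thesis
      using assms by (simp add: util_NCSP_def y_def[symmetric] win_prob_eq_1 min_def)
  next
    case 2
    have "util_NCSP \<gamma> k th b d \<le> 0"
      using 2 assms by (simp add: util_NCSP_def y_def[symmetric] win_prob_eq_1)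
    moreover have "0 \<le> util_NCSP \<gamma> k th b' d"
      using 2 assms win_prob_nonneg[of k b' d] by (simp add: util_NCSP_def y_def[symmetric])
    ultimately show ?thesis
      by linarith
  next
    case 3
    then show ?thesis
      using assms win_prob_nonneg[of k b d]
      by (simp add: util_NCSP_def y_def[symmetric] win_prob_eq_0 mult_nonneg_nonpos)
  qed
qed

lemma undominated_NCSP_bid_less_value:
  assumes k: "1 \<le> k" and "0 < th" "0 < \<gamma>"
    and undominated: "\<not> weakly_dominated (util_NCSP \<gamma> k) k th b"
  shows "b < th"
proof (rule ccontr)
  assume "\<not> b < th"
  define b' where "b' = max (th - \<gamma> / 2) (th / 2)"
  have b': "0 \<le> b'" "th - \<gamma> < b'" "b' < th"
    using assms by (auto simp: b'_def)
  have "util_NCSP \<gamma> k th b (\<lambda>_. b') \<le> 0"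
    using b' \<open>\<not> b < th\<close> by (simp add: util_NCSP_def highest_other_const[OF k] win_prob_eq_1)
  moreover have "0 < util_NCSP \<gamma> k th b' (\<lambda>_. b')"
    using b' win_prob_tie_pos[OF highest_other_const[OF k]]
    by (simp add: util_NCSP_def highest_other_const[OF k])
  ultimately have "weakly_dominated (util_NCSP \<gamma> k) k th b"
    unfolding weakly_dominated_def using b' \<open>\<not> b < th\<close> util_NCSP_le_underbid
    by (intro exI[of _ b']) (auto intro!: exI[of _ "\<lambda>_. b'"])
  with undominated show False ..
qed

section \<open>Independent private values\<close>

locale iid_values =
  fixes vl vh :: real and F :: "real \<Rightarrow> real" and k :: nat
  assumes vl_less_vh: "vl < vh"
    and F_vl: "F vl = 0" and F_vh: "F vh = 1"
    and F_strict_mono: "strict_mono_on {vl<..<vh} F"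
    and F_cont: "continuous_on {vl..vh} F"
    and k_pos: "1 \<le> k"
begin

lemma F_mono: "mono_on {vl..vh} F"
  by (rule mono_on_Icc_if_mono_on_Ioo[OF F_cont strict_mono_on_imp_mono_on[OF F_strict_mono]])

lemma F_pos:
  assumes "vl < x" "x \<le> vh"
  shows "0 < F x"
proof -
  define u w where "u = vl + (x - vl) / 3" and "w = vl + 2 * (x - vl) / 3"
  have uw: "vl < u" "u < w" "w < x"
    using assms by (auto simp: u_def w_def field_simps)
  have "F vl \<le> F u" "F w \<le> F x"
    using uw assms by (auto intro!: mono_onD[OF F_mono])
  moreover have "F u < F w"
    using uw assms by (intro strict_mono_onD[OF F_strict_mono]) auto
  ultimately show ?thesis
    using F_vl by linarith
qed

lemma clamp_in: "clamp vl vh x \<in> {vl..vh}"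
  using vl_less_vh by (auto simp: clamp_def)

definition F_clamp :: "real \<Rightarrow> real" where
  "F_clamp x = F (clamp vl vh x)"

lemma F_clamp_mono: "mono F_clamp"
proof (rule monoI)
  fix x y :: real assume "x \<le> y"
  then show "F_clamp x \<le> F_clamp y"
    unfolding F_clamp_def by (intro mono_onD[OF F_mono] clamp_in monoD[OF mono_clamp])
qed

lemma F_clamp_cont: "continuous_on UNIV F_clamp"
  unfolding F_clamp_def
  by (rule continuous_on_compose2[OF F_cont])
    (use clamp_in in \<open>auto simp: clamp_def intro!: continuous_intros\<close>)

lemma F_clamp_nonneg: "0 \<le> F_clamp x"
  using mono_onD[OF F_mono, of vl "clamp vl vh x"] clamp_in[of x] vl_less_vh F_vl
  by (simp add: F_clamp_def)

lemma F_clamp_eq: "x \<in> {vl..vh} \<Longrightarrow> F_clamp x = F x"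
  by (simp add: F_clamp_def clamp_id)

lemma F_clamp_at_bot: "(F_clamp \<longlongrightarrow> 0) at_bot"
proof (rule tendsto_eventually)
  show "eventually (\<lambda>x. F_clamp x = 0) at_bot"
    using F_vl vl_less_vh
    by (auto simp: F_clamp_def clamp_def eventually_at_bot_linorder intro!: exI[of _ vl])
qed

lemma F_clamp_at_top: "(F_clamp \<longlongrightarrow> 1) at_top"
proof (rule tendsto_eventually)
  show "eventually (\<lambda>x. F_clamp x = 1) at_top"
    using F_vh vl_less_vh
    by (auto simp: F_clamp_def clamp_def eventually_at_top_linorder intro!: exI[of _ vh])
qed

abbreviation \<mu> :: "real measure" where
  "\<mu> \<equiv> value_dist vl vh F"

lemma value_dist_eq: "\<mu> = interval_measure F_clamp"
  unfolding value_dist_def F_clamp_def[abs_def] ..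

lemma F_clamp_right_cont: "continuous (at_right x) F_clamp"
  using F_clamp_cont
  by (simp add: continuous_on_eq_continuous_at continuous_at_imp_continuous_within)

lemma prob_space_value_dist: "prob_space \<mu>"
  using real_distribution_interval_measure[OF monoD[OF F_clamp_mono] F_clamp_right_cont
      F_clamp_at_bot F_clamp_at_top]
  by (simp add: value_dist_eq real_distribution_def)

lemma sets_value_dist[measurable_cong]: "sets \<mu> = sets borel"
  by (simp add: value_dist_eq)

lemma value_dist_singleton: "{x} \<in> null_sets \<mu>"
proof -
  have "emeasure \<mu> {x..x} = F_clamp x - F_clamp x"
    unfolding value_dist_eq
    by (rule emeasure_interval_measure_Icc[OF _ monoD[OF F_clamp_mono] F_clamp_cont]) simp
  then show ?thesis
    by (simp add: null_sets_def value_dist_eq)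
qed

lemma emeasure_value_dist_lessThan: "emeasure \<mu> {..<x} = F_clamp x"
proof -
  have "{..<x} = {..x} - {x}"
    by auto
  then have "emeasure \<mu> {..<x} = emeasure \<mu> ({..x} - {x})"
    by simp
  also have "\<dots> = emeasure \<mu> {..x}"
    by (rule emeasure_Diff_null_set[OF value_dist_singleton]) simp
  also have "\<dots> = F_clamp x"
    unfolding value_dist_eq
    by (rule emeasure_interval_measure_Iic[OF monoD[OF F_clamp_mono] F_clamp_right_cont
          F_clamp_at_bot])
  finally show ?thesis .
qed

lemma AE_value_dist: "AE x in \<mu>. x \<in> {vl<..vh} \<and> x \<noteq> z"
proof -
  interpret prob_space \<mu>
    by (rule prob_space_value_dist)
  have "prob {vl<..vh} = F_clamp vh - F_clamp vl"
    unfolding value_dist_eq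
    by (rule measure_interval_measure_Ioc[OF _ monoD[OF F_clamp_mono] F_clamp_right_cont])
      (use vl_less_vh in simp)
  then have "AE x in \<mu>. x \<in> {vl<..vh}"
    using F_vl F_vh vl_less_vh by (intro AE_prob_1) (simp add: F_clamp_eq)
  moreover have "AE x in \<mu>. x \<notin> {z}"
    by (rule AE_not_in[OF value_dist_singleton])
  ultimately show ?thesis
    by eventually_elim simp
qed

abbreviation \<Omega> :: "(nat \<Rightarrow> real) measure" where
  "\<Omega> \<equiv> others_dist k vl vh F"

abbreviation Y :: "(nat \<Rightarrow> real) \<Rightarrow> real" where
  "Y \<equiv> highest_other k"

lemma prob_space_others_dist: "prob_space \<Omega>"
  unfolding others_dist_def by (rule prob_space_PiM) (rule prob_space_value_dist)

lemma measurable_component[measurable]: "j < k \<Longrightarrow> (\<lambda>x. x j) \<in> borel_measurable \<Omega>"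
  unfolding others_dist_def by measurable

lemma AE_Y: "AE ths in \<Omega>. Y ths \<in> {vl<..vh} \<and> Y ths \<noteq> z"
proof -
  have "AE ths in \<Omega>. \<forall>j\<in>{..<k}. ths j \<in> {vl<..vh} \<and> ths j \<noteq> z"
    unfolding others_dist_def
    by (intro AE_finite_allI AE_PiM_component[OF prob_space_value_dist] AE_value_dist) auto
  then show ?thesis
  proof eventually_elim
    case (elim ths)
    obtain j where "j < k" "Y ths = ths j"
      using highest_other_in[OF k_pos, of ths] by auto
    with elim show ?case
      by auto
  qed
qed

definition G :: "real \<Rightarrow> real" where
  "G z = measure \<Omega> {ths \<in> space \<Omega>. Y ths < z}"

lemma G_eq: "G z = F_clamp z ^ k"
proof -
  interpret product_prob_space "\<lambda>_. \<mu>" "{..<k}"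
    by (rule product_prob_spaceI) (rule prob_space_value_dist)
  have "{ths \<in> space \<Omega>. Y ths < z} = {ths \<in> space \<Omega>. \<forall>j\<in>{..<k}. ths j \<in> {..<z}}"
    using k_pos by (auto simp: highest_other_def lessThan_empty_iff)
  moreover have "emeasure \<Omega> {ths \<in> space \<Omega>. \<forall>j\<in>{..<k}. ths j \<in> {..<z}} = (\<Prod>j<k. emeasure \<mu> {..<z})"
    unfolding others_dist_def by (rule emeasure_PiM_Collect) auto
  ultimately have "emeasure \<Omega> {ths \<in> space \<Omega>. Y ths < z} = (\<Prod>j<k. emeasure \<mu> {..<z})"
    by simp
  then show ?thesis
    by (simp add: G_def measure_def emeasure_value_dist_lessThan F_clamp_nonneg prod_ennreal
        ennreal_power)
qed

lemma G_pos: "vl < z \<Longrightarrow> z \<le> vh \<Longrightarrow> 0 < G z"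
  by (simp add: G_eq F_clamp_eq F_pos)

lemma measure_Y_less[simp]: "measure \<Omega> ({ths. Y ths < z} \<inter> space \<Omega>) = G z"
  by (simp add: G_def Int_def conj_commute)

lemma integrable_indicator_Y: "integrable \<Omega> (\<lambda>ths. indicator {ths. Y ths < z} ths :: real)"
proof -
  interpret prob_space \<Omega>
    by (rule prob_space_others_dist)
  show ?thesis
    by (rule integrable_const_bound[where B=1]) (auto simp: indicator_def)
qed

lemma integrable_indicator_Y_times:
  fixes P :: "(nat \<Rightarrow> real) \<Rightarrow> real"
  assumes [measurable]: "P \<in> borel_measurable \<Omega>" and bounded: "\<And>ths. \<bar>P ths\<bar> \<le> B"
  shows "integrable \<Omega> (\<lambda>ths. indicator {ths. Y ths < z} ths * P ths)"
proof -
  interpret prob_space \<Omega>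
    by (rule prob_space_others_dist)
  show ?thesis
    by (rule integrable_const_bound[where B=B])
      (use bounded order_trans[OF abs_ge_zero bounded] in \<open>auto simp: indicator_def\<close>)
qed

definition partial_mean :: "real \<Rightarrow> real" where
  "partial_mean t = (\<integral>ths. Y ths * indicator {ths. Y ths < t} ths \<partial>\<Omega>)"

lemma integrable_partial_mean: "integrable \<Omega> (\<lambda>ths. Y ths * indicator {ths. Y ths < t} ths)"
proof -
  interpret prob_space \<Omega>
    by (rule prob_space_others_dist)
  show ?thesis
  proof (rule integrable_const_bound[where B="\<bar>vl\<bar> + \<bar>vh\<bar>"])
    show "AE ths in \<Omega>. norm (Y ths * indicator {ths. Y ths < t} ths) \<le> \<bar>vl\<bar> + \<bar>vh\<bar>"
      using AE_Y[of 0] by eventually_elim (auto simp: indicator_def)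
  qed measurable
qed

lemma partial_mean_vl: "partial_mean vl = 0"
  unfolding partial_mean_def
  by (rule integral_eq_zero_AE) (use AE_Y[of 0] in \<open>eventually_elim, auto simp: indicator_def\<close>)

lemma partial_mean_increment:
  assumes "z \<le> t"
  shows "z * (G t - G z) \<le> partial_mean t - partial_mean z"
    and "partial_mean t - partial_mean z \<le> t * (G t - G z)"
proof -
  let ?\<Delta> = "\<lambda>ths. indicator {ths. Y ths < t} ths - indicator {ths. Y ths < z} ths :: real"
  have const: "(\<integral>ths. c * ?\<Delta> ths \<partial>\<Omega>) = c * (G t - G z)" for c
    by (simp add: Bochner_Integration.integral_diff integrable_indicator_Y)
  have mean: "partial_mean t - partial_mean z = (\<integral>ths. Y ths * ?\<Delta> ths \<partial>\<Omega>)"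
    unfolding partial_mean_def
    by (simp add: right_diff_distrib Bochner_Integration.integral_diff integrable_partial_mean)
  have int_Y: "integrable \<Omega> (\<lambda>ths. Y ths * ?\<Delta> ths)"
    by (simp add: right_diff_distrib integrable_partial_mean)
  have int_const: "integrable \<Omega> (\<lambda>ths. c * ?\<Delta> ths)" for c
    by (simp add: integrable_indicator_Y)
  show "z * (G t - G z) \<le> partial_mean t - partial_mean z"
    unfolding mean const[symmetric]
    by (rule integral_mono[OF int_const int_Y]) (auto simp: indicator_def)
  show "partial_mean t - partial_mean z \<le> t * (G t - G z)"
    unfolding mean const[symmetric]
    by (rule integral_mono[OF int_Y int_const]) (use assms in \<open>auto simp: indicator_def\<close>)
qed

section \<open>Revenue equivalence\<close>

lemma mono_bid_clamp:
  assumes "strict_mono_on {vl..vh} \<beta>"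
  shows "mono (\<lambda>x. \<beta> (clamp vl vh x))"
  by (intro monoI strict_mono_on_leD[OF assms] clamp_in monoD[OF mono_clamp])

lemma AE_win_prob_eq_indicator:
  assumes \<beta>: "strict_mono_on {vl..vh} \<beta>" and z: "z \<in> {vl..vh}"
  shows "AE ths in \<Omega>.
    win_prob k (\<beta> z) (\<lambda>j. \<beta> (clamp vl vh (ths j))) = indicator {ths. Y ths < z} ths"
  using AE_Y[of z]
proof eventually_elim
  case (elim ths)
  then have "highest_other k (\<lambda>j. \<beta> (clamp vl vh (ths j))) = \<beta> (Y ths)"
    using highest_other_mono_comp[OF k_pos mono_bid_clamp[OF \<beta>]] by (simp add: clamp_id)
  moreover have "\<beta> (Y ths) < \<beta> z \<longleftrightarrow> Y ths < z" "\<beta> z < \<beta> (Y ths) \<longleftrightarrow> z < Y ths"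
    using elim z by (auto intro!: strict_mono_on_less[OF \<beta>])
  ultimately show ?case
    using elim by (cases "Y ths < z") (auto simp: win_prob_eq_1 win_prob_eq_0)
qed

definition expected_payment ::
  "(real \<Rightarrow> (nat \<Rightarrow> real) \<Rightarrow> real) \<Rightarrow> (real \<Rightarrow> real) \<Rightarrow> real \<Rightarrow> real" where
  "expected_payment p \<beta> z =
     (\<integral>ths. indicator {ths. Y ths < z} ths * p (\<beta> z) (\<lambda>j. \<beta> (clamp vl vh (ths j))) \<partial>\<Omega>)"

lemma expected_payment_vl: "expected_payment p \<beta> vl = 0"
  unfolding expected_payment_def
  by (rule integral_eq_zero_AE) (use AE_Y[of 0] in \<open>eventually_elim, auto simp: indicator_def\<close>)

lemma expected_util_eq:
  assumes u: "\<And>th b d. u th b d = win_prob k b d * (th - p b d)"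
    and \<beta>: "strict_mono_on {vl..vh} \<beta>" and z: "z \<in> {vl..vh}"
    and [measurable]: "(\<lambda>ths. p (\<beta> z) (\<lambda>j. \<beta> (clamp vl vh (ths j)))) \<in> borel_measurable \<Omega>"
    and bounded: "\<And>ths. \<bar>p (\<beta> z) (\<lambda>j. \<beta> (clamp vl vh (ths j)))\<bar> \<le> B"
  shows "expected_util u k vl vh F \<beta> t (\<beta> z) = t * G z - expected_payment p \<beta> z"
proof -
  let ?I = "\<lambda>ths. indicator {ths. Y ths < z} ths :: real"
  let ?P = "\<lambda>ths. p (\<beta> z) (\<lambda>j. \<beta> (clamp vl vh (ths j)))"
  note [measurable] = borel_measurable_mono[OF mono_bid_clamp[OF \<beta>]]
  have "expected_util u k vl vh F \<beta> t (\<beta> z) = (\<integral>ths. t * ?I ths - ?I ths * ?P ths \<partial>\<Omega>)"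
    unfolding expected_util_def u others_dist_def[symmetric]
    by (rule integral_cong_AE)
      (measurable, use AE_win_prob_eq_indicator[OF \<beta> z] in \<open>auto simp: algebra_simps elim: AE_mp\<close>)
  also have "\<dots> = t * G z - expected_payment p \<beta> z"
    unfolding expected_payment_def
    using integrable_indicator_Y integrable_indicator_Y_times[OF _ bounded]
    by (simp add: Bochner_Integration.integral_diff)
  finally show ?thesis .
qed

lemma expected_payment_increment:
  assumes eq: "sym_equilibrium u k vl vh F \<beta>"
    and u: "\<And>th b d. u th b d = win_prob k b d * (th - p b d)"
    and meas: "\<And>z. z \<in> {vl..vh} \<Longrightarrow>
      (\<lambda>ths. p (\<beta> z) (\<lambda>j. \<beta> (clamp vl vh (ths j)))) \<in> borel_measurable \<Omega>"
    and bounded: "\<And>z. z \<in> {vl..vh} \<Longrightarrow> \<exists>B. \<forall>ths. \<bar>p (\<beta> z) (\<lambda>j. \<beta> (clamp vl vh (ths j)))\<bar> \<le> B"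
    and "vl \<le> z" "z \<le> t" "t \<le> vh"
  shows "z * (G t - G z) \<le> expected_payment p \<beta> t - expected_payment p \<beta> z"
    and "expected_payment p \<beta> t - expected_payment p \<beta> z \<le> t * (G t - G z)"
proof -
  have zt: "z \<in> {vl..vh}" "t \<in> {vl..vh}"
    using assms by auto
  have EU: "expected_util u k vl vh F \<beta> s (\<beta> x) = s * G x - expected_payment p \<beta> x"
    if "x \<in> {vl..vh}" for s x
    using bounded[OF that] expected_util_eq[OF u _ that meas[OF that]] eq
    by (auto simp: sym_equilibrium_def)
  have "expected_util u k vl vh F \<beta> t (\<beta> z) \<le> expected_util u k vl vh F \<beta> t (\<beta> t)"
    and "expected_util u k vl vh F \<beta> z (\<beta> t) \<le> expected_util u k vl vh F \<beta> z (\<beta> z)"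
    using eq zt by (auto simp: sym_equilibrium_def)
  then show "z * (G t - G z) \<le> expected_payment p \<beta> t - expected_payment p \<beta> z"
    and "expected_payment p \<beta> t - expected_payment p \<beta> z \<le> t * (G t - G z)"
    unfolding EU[OF zt(1)] EU[OF zt(2)] by (simp_all add: algebra_simps)
qed

theorem revenue_equivalence:
  assumes eq: "sym_equilibrium u k vl vh F \<beta>"
    and u: "\<And>th b d. u th b d = win_prob k b d * (th - p b d)"
    and meas: "\<And>z. z \<in> {vl..vh} \<Longrightarrow>
      (\<lambda>ths. p (\<beta> z) (\<lambda>j. \<beta> (clamp vl vh (ths j)))) \<in> borel_measurable \<Omega>"
    and bounded: "\<And>z. z \<in> {vl..vh} \<Longrightarrow> \<exists>B. \<forall>ths. \<bar>p (\<beta> z) (\<lambda>j. \<beta> (clamp vl vh (ths j)))\<bar> \<le> B"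
    and th: "th \<in> {vl..vh}"
  shows "expected_payment p \<beta> th = partial_mean th"
proof -
  define D where "D t = expected_payment p \<beta> t - partial_mean t" for t
  have "D th = D vl"
  proof (rule eq_if_increments_bounded[where D=D and G=G])
    fix z t assume "vl \<le> z" "z \<le> t" "t \<le> th"
    with th have "vl \<le> z" "z \<le> t" "t \<le> vh"
      by auto
    from expected_payment_increment[OF eq u meas bounded this] partial_mean_increment[OF \<open>z \<le> t\<close>]
    show "\<bar>D t - D z\<bar> \<le> (t - z) * (G t - G z)"
      unfolding D_def by (simp add: abs_le_iff algebra_simps)
  qed (use th in simp)
  then show ?thesis
    by (simp add: D_def expected_payment_vl partial_mean_vl)
qed

lemma FP_bid_times_G:
  assumes eq: "sym_equilibrium (util_FP k) k vl vh F \<beta>" and th: "th \<in> {vl..vh}"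
  shows "\<beta> th * G th = partial_mean th"
proof -
  have "expected_payment (\<lambda>b d. b) \<beta> th = partial_mean th"
    by (rule revenue_equivalence[OF eq _ _ _ th]) (auto simp: util_FP_def)
  then show ?thesis
    by (simp add: expected_payment_def mult.commute)
qed

lemma partial_mean_le_NCSP_bid_times_G:
  assumes eq: "sym_equilibrium (util_NCSP \<gamma> k) k vl vh F \<beta>" and th: "th \<in> {vl..vh}"
  shows "partial_mean th \<le> \<beta> th * G th"
proof -
  let ?p = "\<lambda>b d. min b (highest_other k d + \<gamma>)"
  have \<beta>: "strict_mono_on {vl..vh} \<beta>"
    using eq by (simp add: sym_equilibrium_def)
  note [measurable] = borel_measurable_mono[OF mono_bid_clamp[OF \<beta>]]
  have meas: "(\<lambda>ths. ?p (\<beta> z) (\<lambda>j. \<beta> (clamp vl vh (ths j)))) \<in> borel_measurable \<Omega>" for z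
    by measurable
  have opp_bids: "\<beta> vl \<le> highest_other k (\<lambda>j. \<beta> (clamp vl vh (ths j)))" for ths
    using highest_other_mono_comp[OF k_pos mono_bid_clamp[OF \<beta>]] clamp_in vl_less_vh
    by (auto intro!: strict_mono_on_leD[OF \<beta>])
  have bounded: "\<bar>?p (\<beta> z) (\<lambda>j. \<beta> (clamp vl vh (ths j)))\<bar> \<le> \<bar>\<beta> z\<bar> + \<bar>\<beta> vl\<bar> + \<bar>\<gamma>\<bar>" for z ths
    using opp_bids[of ths] by (auto simp: abs_if min_def)
  have "partial_mean th = expected_payment ?p \<beta> th"
  proof (rule revenue_equivalence[OF eq _ _ _ th, symmetric])
    show "util_NCSP \<gamma> k th b d = win_prob k b d * (th - ?p b d)" for th b d
      by (simp add: util_NCSP_def)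
  qed (use meas bounded in blast)+
  also have "\<dots> \<le> (\<integral>ths. indicator {ths. Y ths < th} ths * \<beta> th \<partial>\<Omega>)"
    unfolding expected_payment_def
    by (intro integral_mono integrable_indicator_Y_times[OF meas bounded]
        integrable_mult_left integrable_indicator_Y)
      (auto simp: indicator_def)
  also have "\<dots> = \<beta> th * G th"
    by (simp add: mult.commute)
  finally show ?thesis .
qed

lemma FP_bid_eq_cond_exp:
  assumes eq: "sym_equilibrium (util_FP k) k vl vh F \<beta>" and th: "th \<in> {vl<..vh}"
  shows "\<beta> th = cond_exp_max_below k vl vh F th"
proof -
  have "0 < G th"
    using th G_pos by simp
  with FP_bid_times_G[OF eq] th have "\<beta> th = partial_mean th / G th"
    by (simp add: field_simps)
  then show ?thesis
    unfolding cond_exp_max_below_def partial_mean_def G_def .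
qed

lemma FP_bid_le_NCSP_bid:
  assumes eqFP: "sym_equilibrium (util_FP k) k vl vh F \<beta>\<^sub>F"
    and eqNCSP: "sym_equilibrium (util_NCSP \<gamma> k) k vl vh F \<beta>\<^sub>N"
    and th: "th \<in> {vl<..vh}"
  shows "\<beta>\<^sub>F th \<le> \<beta>\<^sub>N th"
proof -
  have th': "th \<in> {vl..vh}"
    using th by simp
  have "\<beta>\<^sub>F th * G th \<le> \<beta>\<^sub>N th * G th"
    unfolding FP_bid_times_G[OF eqFP th'] by (rule partial_mean_le_NCSP_bid_times_G[OF eqNCSP th'])
  moreover have "0 < G th"
    using th G_pos by simp
  ultimately show ?thesis
    by (rule mult_right_le_imp_le)
qed

end


theorem proposition2:
  fixes n :: nat and vl vh :: real and F c :: "real \<Rightarrow> real" and \<gamma> :: real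
    and bFP bNCSP bCSP :: "real \<Rightarrow> real"
  assumes n: "n \<ge> 2"
    and vals: "0 \<le> vl" "vl < vh"
    and F_lo: "F vl = 0" and F_hi: "F vh = 1"
    and F_strict: "strict_mono_on {vl<..<vh} F"
    and F_C1: "\<exists>f. continuous_on {vl..vh} f \<and>
                  (\<forall>x\<in>{vl..vh}. (F has_real_derivative f x) (at x within {vl..vh}))"
    and c_diff: "\<forall>x. c differentiable (at x)"
    and c_convex: "convex_on UNIV c"
    and c_incr: "strict_mono_on {0..} c"
    and c_decr: "\<forall>x y. x < y \<and> y < 0 \<longrightarrow> c y < c x"
    and c_zero: "c 0 = 0"
    and c_deriv0: "deriv c 0 \<le> 1"
    and gamma_pos: "\<gamma> > 0"
    and gamma_def: "deriv c \<gamma> = 1"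
    and eqFP: "sym_equilibrium (util_FP (n - 1)) (n - 1) vl vh F bFP"
    and eqNCSP: "sym_equilibrium (util_NCSP \<gamma> (n - 1)) (n - 1) vl vh F bNCSP"
    and eqCSP: "sym_equilibrium (util_CSP (n - 1)) (n - 1) vl vh F bCSP"
    and th: "th \<in> {vl<..vh}"
  shows "cond_exp_max_below (n - 1) vl vh F th = bFP th \<and>
         bFP th \<le> bNCSP th \<and> bNCSP th < bCSP th \<and> bCSP th = th"
proof -
  \<comment> \<open>Likewise only the continuity of F is needed.\<close>
  obtain f where "\<forall>x\<in>{vl..vh}. (F has_real_derivative f x) (at x within {vl..vh})"
    using F_C1 by blast
  then have "continuous_on {vl..vh} F"
    by (intro DERIV_continuous_on) blast
  then interpret iid_values vl vh F "n - 1"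
    by unfold_locales (use vals F_lo F_hi F_strict n in auto)
  have "th \<in> {vl..vh}" and "0 < th" and k: "1 \<le> n - 1"
    using th vals n by auto
  moreover have "bCSP th = th"
    using eqCSP \<open>th \<in> {vl..vh}\<close> \<open>0 < th\<close> unfolding sym_equilibrium_def
    by (intro undominated_CSP_bid_eq_value[OF k]) auto
  moreover have "bNCSP th < th"
    using eqNCSP \<open>th \<in> {vl..vh}\<close> unfolding sym_equilibrium_def
    by (intro undominated_NCSP_bid_less_value[OF k \<open>0 < th\<close> gamma_pos]) auto
  ultimately show ?thesis
    using FP_bid_eq_cond_exp[OF eqFP th] FP_bid_le_NCSP_bid[OF eqFP eqNCSP th] by simp
qed

end
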